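(* Let $D_1$ be an $m\times m$ spherical Euclidean distance matrix (EDM) generated by points that lie on a hypersphere of radius $\rho_1$, and let $D_2$ be an $n\times n$ spherical EDM generated by points that lie on a hypersphere of radius $\rho_2$. Then $D = E_m\otimes D_2 + D_1\otimes E_n$ is a spherical EDM generated by points that lie on a hypersphere of radius $\rho = (\rho_1^2+\rho_2^2)^{1/2}$. Here $E_k$ is the $k\times k$ all-ones matrix and $\otimes$ is the Kronecker product.
   Context: An $N\times N$ matrix $D=(d_{ij})$ is a Euclidean distance matrix (EDM) if there exist points $p^1,\dots,p^N$ in some Euclidean space with $d_{ij}=\|p^i-p^j\|^2$ for all $i,j$; the dimension of their affine span is the embedding dimension $r$ of $D$. An EDM is spherical if it is generated by points lying on a hypersphere. Convention: the generating points of an EDM of embedding dimension $r$ are taken in $\mathbb{R}^r$ (so they affinely span $\mathbb{R}^r$), and the hypersphere is a hypersphere in $\mathbb{R}^r$; its radius is then uniquely determined by the matrix. *)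

theory Defs
  imports Main "HOL-Analysis.Analysis" "Jordan_Normal_Form.Matrix"
begin

text \<open>Points of R^r are represented as functions p :: nat => real, of which only the
  coordinates k < r are relevant. A family of N points is P :: nat => nat => real,
  where P i is the i-th point (i < N).\<close>

definition sqdist :: "nat \<Rightarrow> (nat \<Rightarrow> real) \<Rightarrow> (nat \<Rightarrow> real) \<Rightarrow> real" where
  "sqdist r x y = (\<Sum>k<r. (x k - y k)^2)"

definition generates :: "nat \<Rightarrow> nat \<Rightarrow> (nat \<Rightarrow> nat \<Rightarrow> real) \<Rightarrow> real mat \<Rightarrow> bool" where
  "generates r N P D \<longleftrightarrow> D \<in> carrier_mat N N \<and>
     (\<forall>i<N. \<forall>j<N. D $$ (i, j) = sqdist r (P i) (P j))"

definition is_EDM :: "real mat \<Rightarrow> bool" where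
  "is_EDM D \<longleftrightarrow> (\<exists>N r P. generates r N P D)"

definition affinely_spans :: "nat \<Rightarrow> nat \<Rightarrow> (nat \<Rightarrow> nat \<Rightarrow> real) \<Rightarrow> bool" where
  "affinely_spans r N P \<longleftrightarrow>
     (\<forall>x :: nat \<Rightarrow> real. \<exists>w :: nat \<Rightarrow> real. (\<Sum>i<N. w i) = 1 \<and>
        (\<forall>k<r. x k = (\<Sum>i<N. w i * P i k)))"

text \<open>D is a spherical EDM generated by points lying on a hypersphere of radius rho
  (following the convention: the generating points lie in R^r, affinely span R^r,
  where r is the embedding dimension, and the hypersphere lies in R^r).\<close>
definition spherical_EDM_radius :: "real mat \<Rightarrow> real \<Rightarrow> bool" where
  "spherical_EDM_radius D \<rho> \<longleftrightarrow> \<rho> \<ge> 0 \<and>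
     (\<exists>N r P c. generates r N P D \<and> affinely_spans r N P \<and>
        (\<forall>i<N. sqdist r (P i) c = \<rho>^2))"

definition all_ones_mat :: "nat \<Rightarrow> real mat" where
  "all_ones_mat k = mat k k (\<lambda>_. 1)"

definition kronecker :: "'a::times mat \<Rightarrow> 'a mat \<Rightarrow> 'a mat" where
  "kronecker A B = mat (dim_row A * dim_row B) (dim_col A * dim_col B)
     (\<lambda>(i, j). A $$ (i div dim_row B, j div dim_col B) * B $$ (i mod dim_row B, j mod dim_col B))"

end

theory Submission
  imports Defs
begin

text \<open>Concatenating coordinates, the points (P1 i, P2 j) in R^(r1+r2) generate the Kronecker
  sum, since squared distances add over the two coordinate blocks. If the P1 i lie on a sphere of
  radius rho1 about c1 and the P2 j on a sphere of radius rho2 about c2, the concatenated points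
  lie on the sphere about (c1, c2) of radius sqrt (rho1^2 + rho2^2). They still affinely span
  R^(r1+r2): the product weights w1 i * w2 j reproduce any point whose two coordinate blocks are
  affine combinations with weights w1 and w2.\<close>

lemma sum_lessThan_add:
  fixes f :: "nat \<Rightarrow> 'a::comm_monoid_add"
  shows "(\<Sum>k<a+b. f k) = (\<Sum>k<a. f k) + (\<Sum>k<b. f (a+k))"
  by (induction b) (auto simp: add.assoc)

lemma mult_add_less_mult_nat:
  fixes a b m n :: nat
  assumes "a < m" and "b < n"
  shows "a * n + b < m * n"
proof -
  have "a * n + b < Suc a * n"
    using assms(2) by simp
  also have "\<dots> \<le> m * n"
    using assms(1) by (intro mult_le_mono1) simp
  finally show ?thesis .
qed

lemma div_mod_less_of_less_mult:
  fixes t m n :: nat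
  assumes "t < m * n"
  shows "t div n < m" and "t mod n < n"
proof -
  from assms have "n > 0"
    by (cases n) auto
  with assms show "t div n < m" "t mod n < n"
    by (simp_all add: less_mult_imp_div_less)
qed

lemma sum_lessThan_mult_div_mod:
  fixes g :: "nat \<Rightarrow> nat \<Rightarrow> 'a::comm_monoid_add"
  assumes "n > 0"
  shows "(\<Sum>t<m*n. g (t div n) (t mod n)) = (\<Sum>i<m. \<Sum>j<n. g i j)"
proof -
  have "(\<Sum>t<m*n. g (t div n) (t mod n)) = (\<Sum>(i, j)\<in>{..<m} \<times> {..<n}. g i j)"
    using assms
    by (intro sum.reindex_bij_witness[where i = "\<lambda>(i, j). i*n + j" and j = "\<lambda>t. (t div n, t mod n)"])
       (auto simp: less_mult_imp_div_less mult_add_less_mult_nat)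
  then show ?thesis
    by (simp add: sum.cartesian_product)
qed

lemma sum_lessThan_mult_div_mod_product:
  fixes f g :: "nat \<Rightarrow> 'a::comm_semiring_0"
  assumes "n > 0"
  shows "(\<Sum>t<m*n. f (t div n) * g (t mod n)) = (\<Sum>i<m. f i) * (\<Sum>j<n. g j)"
  using sum_lessThan_mult_div_mod[OF assms, of "\<lambda>i j. f i * g j"] by (simp add: sum_product)

definition append_coords :: "nat \<Rightarrow> (nat \<Rightarrow> real) \<Rightarrow> (nat \<Rightarrow> real) \<Rightarrow> nat \<Rightarrow> real" where
  "append_coords a x y k = (if k < a then x k else y (k - a))"

lemma sqdist_append_coords:
  "sqdist (a+b) (append_coords a x y) (append_coords a x' y') = sqdist a x x' + sqdist b y y'"
  unfolding sqdist_def sum_lessThan_add append_coords_def by simp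

text \<open>Point number t = i*n + j is (P1 i, P2 j), matching the row order of the Kronecker product.\<close>
definition product_points ::
    "nat \<Rightarrow> nat \<Rightarrow> (nat \<Rightarrow> nat \<Rightarrow> real) \<Rightarrow> (nat \<Rightarrow> nat \<Rightarrow> real) \<Rightarrow> nat \<Rightarrow> nat \<Rightarrow> real" where
  "product_points r1 n P1 P2 t = append_coords r1 (P1 (t div n)) (P2 (t mod n))"

lemma sqdist_product_points:
  "sqdist (r1+r2) (product_points r1 n P1 P2 s) (product_points r1 n P1 P2 t) =
    sqdist r1 (P1 (s div n)) (P1 (t div n)) + sqdist r2 (P2 (s mod n)) (P2 (t mod n))"
  unfolding product_points_def by (rule sqdist_append_coords)

lemma sqdist_product_points_center:
  assumes "\<forall>i<m. sqdist r1 (P1 i) c1 = \<rho>1^2" and "\<forall>j<n. sqdist r2 (P2 j) c2 = \<rho>2^2"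
    and "t < m*n"
  shows "sqdist (r1+r2) (product_points r1 n P1 P2 t) (append_coords r1 c1 c2) = \<rho>1^2 + \<rho>2^2"
  using assms div_mod_less_of_less_mult[OF assms(3)]
  by (simp add: product_points_def sqdist_append_coords)

lemma dim_row_kronecker [simp]: "dim_row (kronecker A B) = dim_row A * dim_row B"
  and dim_col_kronecker [simp]: "dim_col (kronecker A B) = dim_col A * dim_col B"
  by (simp_all add: kronecker_def)

lemma index_kronecker:
  assumes "i < dim_row A * dim_row B" "j < dim_col A * dim_col B"
  shows "kronecker A B $$ (i, j) =
    A $$ (i div dim_row B, j div dim_col B) * B $$ (i mod dim_row B, j mod dim_col B)"
  using assms by (simp add: kronecker_def)

lemma generates_kronecker_sum:
  assumes "generates r1 m P1 D1" and "generates r2 n P2 D2"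
  shows "generates (r1+r2) (m*n) (product_points r1 n P1 P2)
    (kronecker (all_ones_mat m) D2 + kronecker D1 (all_ones_mat n))"
proof -
  have D1: "D1 \<in> carrier_mat m m" and D2: "D2 \<in> carrier_mat n n"
    and entries1: "\<And>i j. i < m \<Longrightarrow> j < m \<Longrightarrow> D1 $$ (i, j) = sqdist r1 (P1 i) (P1 j)"
    and entries2: "\<And>i j. i < n \<Longrightarrow> j < n \<Longrightarrow> D2 $$ (i, j) = sqdist r2 (P2 i) (P2 j)"
    using assms unfolding generates_def by blast+
  let ?D = "kronecker (all_ones_mat m) D2 + kronecker D1 (all_ones_mat n)"
  have "?D $$ (i, j) = sqdist (r1+r2) (product_points r1 n P1 P2 i) (product_points r1 n P1 P2 j)"
    if ij: "i < m*n" "j < m*n" for i j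
  proof -
    have "i div n < m" "j div n < m" "i mod n < n" "j mod n < n"
      using ij by (simp_all add: div_mod_less_of_less_mult)
    with ij D1 D2 have "?D $$ (i, j) = D2 $$ (i mod n, j mod n) + D1 $$ (i div n, j div n)"
      by (simp add: index_kronecker all_ones_mat_def)
    with entries1 entries2 \<open>i div n < m\<close> \<open>j div n < m\<close> \<open>i mod n < n\<close> \<open>j mod n < n\<close>
    show ?thesis
      by (simp add: sqdist_product_points)
  qed
  moreover have "?D \<in> carrier_mat (m*n) (m*n)"
    using D1 D2 by (intro add_carrier_mat carrier_matI) (auto simp: all_ones_mat_def)
  ultimately show ?thesis
    unfolding generates_def by blast
qed

lemma affinely_spans_product_points:
  assumes "affinely_spans r1 m P1" and "affinely_spans r2 n P2"
  shows "affinely_spans (r1+r2) (m*n) (product_points r1 n P1 P2)"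
  unfolding affinely_spans_def
proof
  fix x :: "nat \<Rightarrow> real"
  obtain w1 where w1: "(\<Sum>i<m. w1 i) = 1" "\<forall>k<r1. x k = (\<Sum>i<m. w1 i * P1 i k)"
    using assms(1) unfolding affinely_spans_def by (elim allE[of _ x]) blast
  obtain w2 where w2: "(\<Sum>j<n. w2 j) = 1" "\<forall>k<r2. x (r1+k) = (\<Sum>j<n. w2 j * P2 j k)"
    using assms(2) unfolding affinely_spans_def by (elim allE[of _ "\<lambda>k. x (r1+k)"]) blast
  have "n > 0"
    using w2(1) by (cases n) auto
  note product_sum = sum_lessThan_mult_div_mod_product[OF \<open>n > 0\<close>]
  define w where "w t = w1 (t div n) * w2 (t mod n)" for t
  have "x k = (\<Sum>t<m*n. w t * product_points r1 n P1 P2 t k)"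
    if "k < r1+r2" for k
  proof (cases "k < r1")
    case True
    have "(\<Sum>t<m*n. w t * product_points r1 n P1 P2 t k) =
        (\<Sum>t<m*n. (w1 (t div n) * P1 (t div n) k) * w2 (t mod n))"
      using True by (intro sum.cong) (simp_all add: w_def product_points_def append_coords_def)
    also have "\<dots> = (\<Sum>i<m. w1 i * P1 i k) * (\<Sum>j<n. w2 j)"
      by (rule product_sum)
    finally show ?thesis
      using True w1(2) w2(1) by simp
  next
    case False
    have "(\<Sum>t<m*n. w t * product_points r1 n P1 P2 t k) =
        (\<Sum>t<m*n. w1 (t div n) * (w2 (t mod n) * P2 (t mod n) (k - r1)))"
      using False by (intro sum.cong) (simp_all add: w_def product_points_def append_coords_def)
    also have "\<dots> = (\<Sum>i<m. w1 i) * (\<Sum>j<n. w2 j * P2 j (k - r1))"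
      by (rule product_sum)
    finally show ?thesis
      using False that w1(1) w2(2)[rule_format, of "k - r1"] by simp
  qed
  moreover have "(\<Sum>t<m*n. w t) = 1"
    unfolding w_def product_sum using w1(1) w2(1) by simp
  ultimately show "\<exists>w. (\<Sum>t<m*n. w t) = 1 \<and>
      (\<forall>k<r1+r2. x k = (\<Sum>t<m*n. w t * product_points r1 n P1 P2 t k))"
    by blast
qed

theorem theorem5:
  fixes D1 D2 :: "real mat" and m n :: nat and \<rho>1 \<rho>2 :: real
  assumes "D1 \<in> carrier_mat m m" and "spherical_EDM_radius D1 \<rho>1"
    and "D2 \<in> carrier_mat n n" and "spherical_EDM_radius D2 \<rho>2"
  shows "is_EDM (kronecker (all_ones_mat m) D2 + kronecker D1 (all_ones_mat n))
    \<and> spherical_EDM_radius (kronecker (all_ones_mat m) D2 + kronecker D1 (all_ones_mat n))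
        (sqrt (\<rho>1^2 + \<rho>2^2))"
proof -
  from assms(2) obtain N1 r1 P1 c1 where gen1: "generates r1 N1 P1 D1"
    and span1: "affinely_spans r1 N1 P1" and sphere1: "\<forall>i<N1. sqdist r1 (P1 i) c1 = \<rho>1^2"
    unfolding spherical_EDM_radius_def by blast
  from assms(4) obtain N2 r2 P2 c2 where gen2: "generates r2 N2 P2 D2"
    and span2: "affinely_spans r2 N2 P2" and sphere2: "\<forall>j<N2. sqdist r2 (P2 j) c2 = \<rho>2^2"
    unfolding spherical_EDM_radius_def by blast
  have "N1 = m" "N2 = n"
    using gen1 gen2 assms(1,3) unfolding generates_def by auto
  define D where "D = kronecker (all_ones_mat m) D2 + kronecker D1 (all_ones_mat n)"
  define Q where "Q = product_points r1 n P1 P2"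
  have gen: "generates (r1+r2) (m*n) Q D"
    using generates_kronecker_sum gen1 gen2 \<open>N1 = m\<close> \<open>N2 = n\<close> unfolding D_def Q_def by blast
  have "affinely_spans (r1+r2) (m*n) Q"
    using affinely_spans_product_points span1 span2 \<open>N1 = m\<close> \<open>N2 = n\<close> unfolding Q_def by blast
  moreover have "\<forall>t<m*n. sqdist (r1+r2) (Q t) (append_coords r1 c1 c2) = (sqrt (\<rho>1^2 + \<rho>2^2))^2"
    using sqdist_product_points_center sphere1 sphere2 \<open>N1 = m\<close> \<open>N2 = n\<close> unfolding Q_def by simp
  ultimately have "spherical_EDM_radius D (sqrt (\<rho>1^2 + \<rho>2^2))"
    unfolding spherical_EDM_radius_def using gen
    by (intro conjI exI[of _ "m*n"] exI[of _ "r1+r2"] exI[of _ Q]) auto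
  with gen show ?thesis
    unfolding D_def is_EDM_def by blast
qed

end
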